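(* For an ideal $\mathcal{I}$ on $\omega$, the following are equivalent: (1) Player I has a winning strategy in the HMM game with respect to $\mathcal{I}$; (2) Player II has a winning strategy in the tallness game with respect to $\mathcal{I}$; (3) $\mathcal{ED}_{\mathrm{fin}}\le_{\mathrm{KB}}\mathcal{I}$.
   Context: Ideals on $\omega$ are assumed to contain all finite sets. $\mathcal{ED}$ is the ideal on $\omega\times\omega$ generated by the vertical lines $\{n\}\times\omega$ and the graphs of functions from $\omega$ to $\omega$. $\Delta=\{(m,n)\in\omega^2: n\le m\}$ and $\mathcal{ED}_{\mathrm{fin}}=\{A\cap\Delta: A\in\mathcal{ED}\}$, an ideal on the countable set $\Delta$. For ideals $\mathcal{J}$ on $X$ and $\mathcal{I}$ on $Y$, $\mathcal{J}\le_{\mathrm{KB}}\mathcal{I}$ means there is a finite-to-one $f:Y\to X$ with $f^{-1}(J)\in\mathcal{I}$ for every $J\in\mathcal{J}$. Tallness game with respect to $\mathcal{I}$: at round $k$, Player I plays $n_k\in\omega$ with $n_0<n_1<\cdots$, then Player II plays $i_k\in\{0,1\}$; Player II wins iff $\{n_k: i_k=1\}$ is infinite and belongs to $\mathcal{I}$. HMM game with respect to $\mathcal{I}$: at round $k$, Player I plays a finite set $F_k\subseteq\omega$, then Player II plays $n_k\in\omega\setminus F_k$; Player I wins iff $\{n_k:k\in\omega\}\in\mathcal{I}$. *)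

theory Defs
  imports Main
begin

definition is_ideal :: "'a set \<Rightarrow> 'a set set \<Rightarrow> bool" where
  "is_ideal X I \<longleftrightarrow>
     I \<subseteq> Pow X
   \<and> (\<forall>A B. A \<in> I \<longrightarrow> B \<subseteq> A \<longrightarrow> B \<in> I)
   \<and> (\<forall>A\<in>I. \<forall>B\<in>I. A \<union> B \<in> I)
   \<and> (\<forall>F. F \<subseteq> X \<longrightarrow> finite F \<longrightarrow> F \<in> I)
   \<and> X \<notin> I"

definition ED :: "(nat \<times> nat) set set" where
  "ED = {A. \<exists>(V :: nat set) (F :: (nat \<Rightarrow> nat) set). finite V \<and> finite F \<and>
            A \<subseteq> (\<Union>n\<in>V. {n} \<times> UNIV) \<union> (\<Union>f\<in>F. {(m, f m) | m. True})}"

definition Delta :: "(nat \<times> nat) set" where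
  "Delta = {(m, n). n \<le> m}"

definition ED_fin :: "(nat \<times> nat) set set" where
  "ED_fin = {A \<inter> Delta | A. A \<in> ED}"

definition KB_le :: "'a set \<Rightarrow> 'a set set \<Rightarrow> 'b set \<Rightarrow> 'b set set \<Rightarrow> bool" where
  "KB_le X J Y I \<longleftrightarrow> (\<exists>f :: 'b \<Rightarrow> 'a.
      (\<forall>y\<in>Y. f y \<in> X)
    \<and> (\<forall>x\<in>X. finite {y\<in>Y. f y = x})
    \<and> (\<forall>A\<in>J. {y\<in>Y. f y \<in> A} \<in> I))"

text \<open>HMM game: a strategy for Player I maps the list of Player II's previous
moves to a finite set; it is winning if every play consistent with it
(Player II always plays outside the current finite set) yields a set in I.\<close>
definition HMM_I_winning_strategy :: "nat set set \<Rightarrow> (nat list \<Rightarrow> nat set) \<Rightarrow> bool" where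
  "HMM_I_winning_strategy I \<sigma> \<longleftrightarrow>
     (\<forall>s. finite (\<sigma> s))
   \<and> (\<forall>n :: nat \<Rightarrow> nat. (\<forall>k. n k \<notin> \<sigma> (map n [0..<k])) \<longrightarrow> range n \<in> I)"

definition HMM_I_wins :: "nat set set \<Rightarrow> bool" where
  "HMM_I_wins I \<longleftrightarrow> (\<exists>\<sigma>. HMM_I_winning_strategy I \<sigma>)"

text \<open>Tallness game: a strategy for Player II maps the list of Player I's moves
n_0,...,n_k (strictly increasing) to i_k; it is winning if for every strictly
increasing play of Player I the set of selected n_k is infinite and in I.\<close>
definition tall_II_winning_strategy :: "nat set set \<Rightarrow> (nat list \<Rightarrow> bool) \<Rightarrow> bool" where
  "tall_II_winning_strategy I \<tau> \<longleftrightarrow>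
     (\<forall>n :: nat \<Rightarrow> nat. strict_mono n \<longrightarrow>
        (let S = {n k | k. \<tau> (map n [0..<Suc k])} in infinite S \<and> S \<in> I))"

definition tall_II_wins :: "nat set set \<Rightarrow> bool" where
  "tall_II_wins I \<longleftrightarrow> (\<exists>\<tau>. tall_II_winning_strategy I \<tau>)"

end

theory Submission
  imports Defs "HOL-Library.Sublist" "HOL-Library.Infinite_Set"
begin

text \<open>
  (3) \<Longrightarrow> (2): if f reduces ED_fin to I, Player II accepts a move exactly when the column
  of its f-image exceeds all earlier columns. Finite-to-oneness makes the accepted moves
  infinite, and distinct accepted moves have distinct columns, so f maps them into a graph,
  whose preimage lies in I.

  (2) \<Longrightarrow> (1): against a winning strategy \<tau> of Player II, every position extends to one at
  which \<tau> rejects only finitely many moves (otherwise Player I could make \<tau> reject forever).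
  Player I keeps such a position of the tallness game and forbids the moves \<tau> rejects
  there; every legal play of the HMM game is then a set of moves accepted by \<tau> in a single
  tallness play.

  (1) \<Longrightarrow> (3): cut \<omega> into blocks so that Player I's answers to positions below one block
  boundary lie below the next one, and send y to (end of its block, y). A set meeting each
  column of a graph at most once splits, by parity of the column, into sets whose consecutive
  elements are two blocks apart; these are legal plays against Player I, hence in I.
\<close>

lemma is_ideal_subset: "is_ideal X I \<Longrightarrow> A \<in> I \<Longrightarrow> B \<subseteq> A \<Longrightarrow> B \<in> I"
  unfolding is_ideal_def by blast

lemma is_ideal_Un: "is_ideal X I \<Longrightarrow> A \<in> I \<Longrightarrow> B \<in> I \<Longrightarrow> A \<union> B \<in> I"
  unfolding is_ideal_def by blast

lemma is_ideal_finite: "is_ideal X I \<Longrightarrow> F \<subseteq> X \<Longrightarrow> finite F \<Longrightarrow> F \<in> I"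
  unfolding is_ideal_def by blast

lemma is_ideal_UN_finite:
  assumes "is_ideal X I" "finite F" "\<And>x. x \<in> F \<Longrightarrow> A x \<in> I"
  shows "(\<Union>x\<in>F. A x) \<in> I"
  using assms(2,3)
proof (induction F rule: finite_induct)
  case empty
  then show ?case using is_ideal_finite[OF assms(1)] by simp
next
  case (insert x F)
  then show ?case using is_ideal_Un[OF assms(1)] by simp
qed

locale growing_chain =
  fixes L :: "nat \<Rightarrow> 'a list"
  assumes prefix_Suc: "prefix (L k) (L (Suc k))"
    and length_ge: "k \<le> length (L k)"
begin

definition lim :: "nat \<Rightarrow> 'a" where
  "lim j = L (Suc j) ! j"

lemma prefix_mono: "k \<le> k' \<Longrightarrow> prefix (L k) (L k')"
  by (rule transitive_stepwise_le[where R = "\<lambda>k k'. prefix (L k) (L k')"])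
    (auto intro: prefix_Suc)

lemma lim_nth:
  assumes "j < length (L k)"
  shows "lim j = L k ! j"
proof -
  have "j < length (L (Suc j))" using length_ge[of "Suc j"] by simp
  moreover have "prefix (L k) (L (Suc j)) \<or> prefix (L (Suc j)) (L k)"
    using prefix_mono nat_le_linear by blast
  ultimately show ?thesis using assms by (auto simp: lim_def prefix_def nth_append)
qed

lemma map_lim: "m \<le> length (L k) \<Longrightarrow> map lim [0..<m] = take m (L k)"
  by (rule nth_equalityI) (auto simp: lim_nth)

end

lemma growing_chain_strict_mono_lim:
  fixes L :: "nat \<Rightarrow> 'a::order list"
  assumes "growing_chain L" and "\<And>k. sorted_wrt (<) (L k)"
  shows "strict_mono (growing_chain.lim L)"
  unfolding strict_mono_Suc_iff
proof
  interpret growing_chain L by (fact assms(1))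
  fix j
  have "Suc j < length (L (Suc (Suc j)))" using length_ge[of "Suc (Suc j)"] by simp
  then show "lim j < lim (Suc j)"
    using assms(2)[of "Suc (Suc j)"] lim_nth[of j "Suc (Suc j)"] lim_nth[of "Suc j" "Suc (Suc j)"]
    by (simp add: sorted_wrt_iff_nth_less)
qed

lemma finite_Delta_columns_le: "finite {d \<in> Delta. fst d \<le> C}"
  by (rule finite_subset[of _ "{..C} \<times> {..C}"]) (auto simp: Delta_def)

lemma graph_Int_Delta_in_ED_fin: "{(m, g m) | m. True} \<inter> Delta \<in> ED_fin"
  unfolding ED_fin_def ED_def
  by (rule CollectI, rule exI[of _ "{(m, g m) | m. True}"])
    (auto intro!: exI[of _ "{}"] exI[of _ "{g}"])

lemma infinite_records:
  fixes g :: "nat \<Rightarrow> nat"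
  assumes fin: "\<And>C. finite {k. g k \<le> C}"
  shows "infinite {k. \<forall>j<k. g j < g k}"
  unfolding infinite_nat_iff_unbounded
proof
  fix K
  define C where "C = Max (g ` {..K})"
  have "\<exists>k. C < g k"
  proof (rule ccontr)
    assume "\<nexists>k. C < g k"
    then have "{k. g k \<le> C} = UNIV" by (auto simp: not_less)
    then show False using fin[of C] by simp
  qed
  then obtain k where k: "C < g k" and least: "\<And>j. j < k \<Longrightarrow> g j \<le> C"
    using exists_least_iff[of "\<lambda>k. C < g k"] by (auto simp: not_less)
  have "j \<le> K \<Longrightarrow> g j \<le> C" for j unfolding C_def by (rule Max_ge) auto
  then have "K < k" using k by (meson not_le leD)
  moreover have "\<forall>j<k. g j < g k" using least k by (meson le_less_trans)
  ultimately show "\<exists>k>K. k \<in> {k. \<forall>j<k. g j < g k}" by blast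
qed

lemma inj_on_records:
  fixes g :: "nat \<Rightarrow> 'a::linorder"
  shows "inj_on g {k. \<forall>j<k. g j < g k}"
proof (rule inj_onI)
  fix k k' assume "k \<in> {k. \<forall>j<k. g j < g k}" "k' \<in> {k. \<forall>j<k. g j < g k}" "g k = g k'"
  then have "\<not> k < k'" "\<not> k' < k" by auto
  then show "k = k'" by simp
qed

lemma subset_graph_if_inj_on_fst:
  assumes "inj_on (fst \<circ> f) S"
  obtains g where "\<And>y. y \<in> S \<Longrightarrow> f y \<in> {(m, g m) | m. True}"
proof
  fix y assume "y \<in> S"
  then have "inv_into S (fst \<circ> f) (fst (f y)) = y" using assms inv_into_f_f by fastforce
  then show "f y \<in> {(m, snd (f (inv_into S (fst \<circ> f) m))) | m. True}"
    by (metis (mono_tags, lifting) mem_Collect_eq prod.collapse)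
qed

lemma KB_le_imp_tall_II_wins:
  assumes idl: "is_ideal UNIV I" and kb: "KB_le Delta ED_fin UNIV I"
  shows "tall_II_wins I"
proof -
  obtain f where f_Delta: "\<forall>y. f y \<in> Delta" and fibres: "\<forall>x\<in>Delta. finite {y. f y = x}"
    and preimage: "\<forall>A\<in>ED_fin. {y. f y \<in> A} \<in> I"
    using kb unfolding KB_le_def by auto
  define c where "c = fst \<circ> f"
  have fin_c: "finite {y. c y \<le> C}" for C
  proof -
    have "{y. c y \<le> C} = (\<Union>d\<in>{d \<in> Delta. fst d \<le> C}. {y. f y = d})"
      using f_Delta by (auto simp: c_def)
    then show ?thesis using finite_Delta_columns_le fibres by auto
  qed
  define \<tau> where "\<tau> xs = (\<forall>x\<in>set (butlast xs). c x < c (last xs))" for xs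
  have "tall_II_winning_strategy I \<tau>"
    unfolding tall_II_winning_strategy_def Let_def
  proof (intro allI impI conjI)
    fix n :: "nat \<Rightarrow> nat" assume sm: "strict_mono n"
    define R where "R = {k. \<forall>j<k. c (n j) < c (n k)}"
    have S: "{n k |k. \<tau> (map n [0..<Suc k])} = n ` R"
      by (auto simp: \<tau>_def R_def)
    have "finite {k. c (n k) \<le> C}" for C
      using finite_vimageI[OF fin_c strict_mono_imp_inj_on[OF sm]] by (simp add: vimage_def)
    then have "infinite R" unfolding R_def by (rule infinite_records)
    moreover have "inj_on n R" using strict_mono_imp_inj_on[OF sm] inj_on_subset by blast
    ultimately show "infinite {n k |k. \<tau> (map n [0..<Suc k])}"
      unfolding S using finite_imageD by blast
    have "inj_on c (n ` R)"
      using inj_on_records[of "c \<circ> n"] unfolding R_def by (simp add: inj_on_imageI)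
    then obtain g where "\<And>y. y \<in> n ` R \<Longrightarrow> f y \<in> {(m, g m) | m. True}"
      using subset_graph_if_inj_on_fst unfolding c_def by blast
    then have "n ` R \<subseteq> {y. f y \<in> {(m, g m) | m. True} \<inter> Delta}" using f_Delta by blast
    then show "{n k |k. \<tau> (map n [0..<Suc k])} \<in> I"
      unfolding S using preimage graph_Int_Delta_in_ED_fin is_ideal_subset[OF idl] by blast
  qed
  then show ?thesis unfolding tall_II_wins_def by blast
qed

definition responses_below :: "(nat list \<Rightarrow> nat set) \<Rightarrow> nat \<Rightarrow> nat set" where
  "responses_below \<sigma> B = (\<Union>s\<in>{s. set s \<subseteq> {..<B} \<and> distinct s}. \<sigma> s)"

fun block :: "(nat list \<Rightarrow> nat set) \<Rightarrow> nat \<Rightarrow> nat" where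
  "block \<sigma> 0 = 0"
| "block \<sigma> (Suc m) = Suc (Max (insert (block \<sigma> m) (responses_below \<sigma> (block \<sigma> m))))"

definition column :: "(nat list \<Rightarrow> nat set) \<Rightarrow> nat \<Rightarrow> nat" where
  "column \<sigma> y = (LEAST j. y < block \<sigma> j)"

context
  fixes \<sigma> :: "nat list \<Rightarrow> nat set"
  assumes finite_\<sigma>: "\<And>s. finite (\<sigma> s)"
begin

lemma finite_responses_below: "finite (responses_below \<sigma> B)"
  unfolding responses_below_def using finite_\<sigma> finite_subset_distinct[of "{..<B}"] by auto

lemma response_less_block:
  assumes "set s \<subseteq> {..<block \<sigma> m}" "distinct s" "x \<in> \<sigma> s"
  shows "x < block \<sigma> (Suc m)"
proof -
  have "x \<in> responses_below \<sigma> (block \<sigma> m)" using assms unfolding responses_below_def by blast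
  then show ?thesis using finite_responses_below by (simp add: le_imp_less_Suc)
qed

lemma strict_mono_block: "strict_mono (block \<sigma>)"
  unfolding strict_mono_Suc_iff using finite_responses_below by (simp add: le_imp_less_Suc)

lemma less_block_column: "y < block \<sigma> (column \<sigma> y)"
proof -
  have "y < block \<sigma> (Suc y)"
    by (rule Suc_le_lessD) (rule strict_mono_imp_increasing[OF strict_mono_block])
  then show ?thesis unfolding column_def by (rule LeastI)
qed

lemma block_column_pred_le: "block \<sigma> (column \<sigma> y - 1) \<le> y"
proof -
  have "column \<sigma> y \<noteq> 0" using less_block_column[of y] by (metis block.simps(1) not_less0)
  then have "column \<sigma> y - 1 < column \<sigma> y" by simp
  then show ?thesis unfolding column_def using not_less_Least not_le by blast
qed

lemma column_mono: "y \<le> y' \<Longrightarrow> column \<sigma> y \<le> column \<sigma> y'"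
  unfolding column_def[of \<sigma> y] using less_block_column[of y'] by (intro Least_le) simp

lemma less_block_if_column_le: "column \<sigma> y \<le> m \<Longrightarrow> y < block \<sigma> m"
  using less_block_column[of y] strict_mono_block by (meson less_le_trans strict_mono_less_eq)

text \<open>A play of Player II whose columns are at least 2 and grow by at least 2 at each move
  is legal against \<sigma>: all earlier moves lie below block (column y - 2), so \<sigma>'s answer
  lies below block (column y - 1), which is at most y.\<close>
lemma sparse_columns_in_ideal:
  assumes win: "HMM_I_winning_strategy I \<sigma>" and idl: "is_ideal UNIV I"
    and ge2: "\<And>y. y \<in> T \<Longrightarrow> 2 \<le> column \<sigma> y"
    and gap: "\<And>y y'. y \<in> T \<Longrightarrow> y' \<in> T \<Longrightarrow> y < y' \<Longrightarrow> column \<sigma> y + 2 \<le> column \<sigma> y'"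
  shows "T \<in> I"
proof (cases "finite T")
  case True
  then show ?thesis using is_ideal_finite[OF idl] by blast
next
  case False
  define e where "e = enumerate T"
  have sm: "strict_mono e" and rng: "range e = T"
    unfolding e_def using False by (simp_all add: strict_mono_enumerate range_enumerate)
  have "e k \<notin> \<sigma> (map e [0..<k])" for k
  proof
    assume resp: "e k \<in> \<sigma> (map e [0..<k])"
    define M where "M = column \<sigma> (e k) - 2"
    have "e j < block \<sigma> M" if "j < k" for j
    proof -
      have "column \<sigma> (e j) + 2 \<le> column \<sigma> (e k)"
        using gap rng sm that by (simp add: strict_mono_less range_subsetD)
      then show ?thesis unfolding M_def by (intro less_block_if_column_le) simp
    qed
    then have "set (map e [0..<k]) \<subseteq> {..<block \<sigma> M}" by auto
    moreover have "distinct (map e [0..<k])"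
      using strict_mono_imp_inj_on[OF sm] by (simp add: distinct_map inj_on_subset)
    ultimately have "e k < block \<sigma> (Suc M)" using resp by (rule response_less_block)
    moreover have "Suc M = column \<sigma> (e k) - 1" using ge2[of "e k"] rng by (auto simp: M_def)
    ultimately show False using block_column_pred_le[of "e k"] by simp
  qed
  then have "range e \<in> I" using win unfolding HMM_I_winning_strategy_def by blast
  then show ?thesis using rng by simp
qed

lemma inj_on_column_in_ideal:
  assumes win: "HMM_I_winning_strategy I \<sigma>" and idl: "is_ideal UNIV I"
    and inj: "inj_on (column \<sigma>) T"
  shows "T \<in> I"
proof -
  have gap: "column \<sigma> y + 2 \<le> column \<sigma> y'"
    if "y \<in> T" "y' \<in> T" "y < y'" "even (column \<sigma> y) = even (column \<sigma> y')" for y y'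
  proof -
    have "column \<sigma> y \<le> column \<sigma> y'" using column_mono that(3) by simp
    moreover have "column \<sigma> y \<noteq> column \<sigma> y'" using inj that(1-3) by (auto dest: inj_onD)
    moreover have "a \<le> b \<Longrightarrow> a \<noteq> b \<Longrightarrow> even a = even b \<Longrightarrow> a + 2 \<le> b" for a b :: nat
      by presburger
    ultimately show ?thesis using that(4) by blast
  qed
  have "{y \<in> T. column \<sigma> y < 2} \<subseteq> {..<block \<sigma> 2}"
    using less_block_if_column_le by fastforce
  then have low: "{y \<in> T. column \<sigma> y < 2} \<in> I"
    using is_ideal_finite[OF idl] finite_subset by blast
  have even: "{y \<in> T. 2 \<le> column \<sigma> y \<and> even (column \<sigma> y)} \<in> I"
    by (rule sparse_columns_in_ideal[OF win idl]) (use gap in auto)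
  have odd: "{y \<in> T. 2 \<le> column \<sigma> y \<and> odd (column \<sigma> y)} \<in> I"
    by (rule sparse_columns_in_ideal[OF win idl]) (use gap in auto)
  have "T = {y \<in> T. column \<sigma> y < 2} \<union> {y \<in> T. 2 \<le> column \<sigma> y \<and> even (column \<sigma> y)}
      \<union> {y \<in> T. 2 \<le> column \<sigma> y \<and> odd (column \<sigma> y)}" (is "_ = ?U") by auto
  also have "?U \<in> I" by (intro is_ideal_Un[OF idl] low even odd)
  finally show ?thesis .
qed

end

lemma HMM_I_wins_imp_KB_le:
  assumes idl: "is_ideal UNIV I" and hmm: "HMM_I_wins I"
  shows "KB_le Delta ED_fin UNIV I"
proof -
  obtain \<sigma> where win: "HMM_I_winning_strategy I \<sigma>"
    using hmm unfolding HMM_I_wins_def by blast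
  then have fin: "\<And>s. finite (\<sigma> s)" unfolding HMM_I_winning_strategy_def by blast
  define h where "h y = block \<sigma> (column \<sigma> y)" for y
  have h_gt: "y < h y" for y unfolding h_def using less_block_column[OF fin] .
  have graph: "{y. g (h y) = y} \<in> I" for g
  proof (rule inj_on_column_in_ideal[OF fin win idl], rule inj_onI)
    fix y y' assume y: "y \<in> {y. g (h y) = y}" and y': "y' \<in> {y. g (h y) = y}"
      and "column \<sigma> y = column \<sigma> y'"
    then have "h y = h y'" by (simp add: h_def)
    then show "y = y'" using y y' by simp
  qed
  define f where "f y = (h y, y)" for y
  have "{y. f y \<in> A} \<in> I" if "A \<in> ED_fin" for A
  proof -
    obtain A0 V F where A: "A = A0 \<inter> Delta" and V: "finite V" and F: "finite F"
      and A0: "A0 \<subseteq> (\<Union>n\<in>V. {n} \<times> UNIV) \<union> (\<Union>g\<in>F. {(m, g m) | m. True})"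
      using \<open>A \<in> ED_fin\<close> unfolding ED_fin_def ED_def by blast
    have "{y. f y \<in> A} \<subseteq> (\<Union>n\<in>V. {..n}) \<union> (\<Union>g\<in>F. {y. g (h y) = y})"
    proof
      fix y assume "y \<in> {y. f y \<in> A}"
      then have "(h y, y) \<in> A0" using A by (simp add: f_def)
      then have "(h y, y) \<in> (\<Union>n\<in>V. {n} \<times> UNIV) \<union> (\<Union>g\<in>F. {(m, g m) | m. True})"
        using A0 by blast
      then have "h y \<in> V \<or> (\<exists>g\<in>F. g (h y) = y)" by force
      then show "y \<in> (\<Union>n\<in>V. {..n}) \<union> (\<Union>g\<in>F. {y. g (h y) = y})"
        using h_gt[of y] by (auto intro: less_imp_le)
    qed
    moreover have "(\<Union>n\<in>V. {..n}) \<in> I" using is_ideal_finite[OF idl] V by simp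
    moreover have "(\<Union>g\<in>F. {y. g (h y) = y}) \<in> I" using is_ideal_UN_finite[OF idl F] graph .
    ultimately show ?thesis by (meson is_ideal_Un[OF idl] is_ideal_subset[OF idl])
  qed
  moreover have "f y \<in> Delta" for y using h_gt by (simp add: f_def Delta_def less_imp_le)
  moreover have "finite {y. f y = x}" for x by (rule finite_subset[of _ "{snd x}"]) (auto simp: f_def)
  ultimately show ?thesis unfolding KB_le_def by (intro exI[of _ f]) simp
qed

definition rejected :: "(nat list \<Rightarrow> bool) \<Rightarrow> nat list \<Rightarrow> nat set" where
  "rejected \<tau> q = {y. \<not> \<tau> (q @ [y])}"

lemma tall_II_winning_strategyD:
  assumes "tall_II_winning_strategy I \<tau>" "strict_mono n"
  shows "infinite {n k |k. \<tau> (map n [0..<Suc k])}" "{n k |k. \<tau> (map n [0..<Suc k])} \<in> I"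
  using assms by (simp_all add: tall_II_winning_strategy_def Let_def)

lemma infinite_nat_exists_greater:
  assumes "infinite (S :: nat set)" "finite A"
  shows "\<exists>y\<in>S. \<forall>x\<in>A. x < y"
proof -
  obtain y where "Max (insert 0 A) < y" "y \<in> S"
    using assms(1) unfolding infinite_nat_iff_unbounded by blast
  then show ?thesis using assms(2) by (meson Max_ge finite_insert insertCI le_less_trans)
qed

lemma rejecting_play:
  assumes p: "sorted_wrt (<) p"
    and inf: "\<And>r. sorted_wrt (<) (p @ r) \<Longrightarrow> infinite (rejected \<tau> (p @ r))"
  obtains n where "strict_mono n" "\<And>k. length p \<le> k \<Longrightarrow> \<not> \<tau> (map n [0..<Suc k])"
proof -
  define nxt where "nxt q = (SOME y. y \<in> rejected \<tau> q \<and> (\<forall>x\<in>set q. x < y))" for q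
  define L where "L k = ((\<lambda>q. q @ [nxt q]) ^^ k) p" for k
  have L_Suc: "L (Suc k) = L k @ [nxt (L k)]" for k by (simp add: L_def)
  have nxt: "nxt q \<in> rejected \<tau> q \<and> (\<forall>x\<in>set q. x < nxt q)"
    if "prefix p q" "sorted_wrt (<) q" for q
  proof -
    have "infinite (rejected \<tau> q)" using that inf by (auto simp: prefix_def)
    then have "\<exists>y. y \<in> rejected \<tau> q \<and> (\<forall>x\<in>set q. x < y)"
      using infinite_nat_exists_greater[of _ "set q"] by blast
    then show ?thesis unfolding nxt_def by (rule someI_ex)
  qed
  have inv: "prefix p (L k) \<and> sorted_wrt (<) (L k) \<and> length (L k) = length p + k" for k
  proof (induction k)
    case 0
    then show ?case using p by (simp add: L_def)
  next
    case (Suc k)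
    then show ?case using nxt[of "L k"] unfolding L_Suc
      by (auto simp: sorted_wrt_append prefix_order.trans)
  qed
  interpret growing_chain L
    by unfold_locales (use inv in \<open>auto simp: L_Suc\<close>)
  show ?thesis
  proof
    show "strict_mono lim"
      using growing_chain_strict_mono_lim growing_chain_axioms inv by blast
    fix k assume "length p \<le> k"
    then obtain K where K: "length (L K) = k" using inv by (metis le_add_diff_inverse)
    have "map lim [0..<Suc k] = take (Suc k) (L (Suc K))"
      by (rule map_lim) (simp add: L_Suc K)
    also have "\<dots> = L K @ [nxt (L K)]" using K by (simp add: L_Suc)
    finally show "\<not> \<tau> (map lim [0..<Suc k])"
      using nxt[of "L K"] inv by (simp add: rejected_def)
  qed
qed

lemma finitely_rejected_extension:
  assumes win: "tall_II_winning_strategy I \<tau>" and p: "sorted_wrt (<) p"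
  shows "\<exists>q. prefix p q \<and> sorted_wrt (<) q \<and> finite (rejected \<tau> q)"
proof (rule ccontr)
  assume "\<not> ?thesis"
  then obtain n where sm: "strict_mono n" and rej: "\<And>k. length p \<le> k \<Longrightarrow> \<not> \<tau> (map n [0..<Suc k])"
    using rejecting_play[OF p] by (metis prefixI)
  have "{n k |k. \<tau> (map n [0..<Suc k])} \<subseteq> n ` {..<length p}"
    using rej not_le by blast
  then show False using tall_II_winning_strategyD[OF win sm] finite_surj by blast
qed

lemma accepted_moves_in_ideal:
  assumes win: "tall_II_winning_strategy I \<tau>" and idl: "is_ideal UNIV I"
    and ext: "\<And>k. prefix (L k @ [n k]) (L (Suc k))"
    and acc: "\<And>k. \<tau> (L k @ [n k])"
    and sorted: "\<And>k. sorted_wrt (<) (L k)"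
  shows "range n \<in> I"
proof -
  have "k \<le> length (L k)" for k
  proof (induction k)
    case (Suc k)
    then show ?case using prefix_length_le[OF ext[of k]] by simp
  qed simp
  then interpret growing_chain L
    by unfold_locales (use ext in \<open>auto simp: prefix_def\<close>)
  have sm: "strict_mono lim"
    using growing_chain_strict_mono_lim[OF growing_chain_axioms sorted] .
  have "n k \<in> {lim i |i. \<tau> (map lim [0..<Suc i])}" for k
  proof -
    define i where "i = length (L k)"
    have "map lim [0..<Suc i] = take (Suc i) (L (Suc k))"
      by (rule map_lim) (use prefix_length_le[OF ext[of k]] in \<open>simp add: i_def\<close>)
    also have "\<dots> = L k @ [n k]"
      using ext[of k] by (auto simp: i_def prefix_def)
    finally have play: "map lim [0..<Suc i] = L k @ [n k]" .
    then have "lim i = n k"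
      using arg_cong[OF play, of "\<lambda>xs. xs ! i"] by (simp add: i_def)
    moreover have "\<tau> (map lim [0..<Suc i])" using acc[of k] by (simp only: play)
    ultimately show ?thesis by (metis (mono_tags, lifting) mem_Collect_eq)
  qed
  then have "range n \<subseteq> {lim i |i. \<tau> (map lim [0..<Suc i])}" by blast
  then show ?thesis using tall_II_winning_strategyD(2)[OF win sm] is_ideal_subset[OF idl] by blast
qed

lemma tall_II_wins_imp_HMM_I_wins:
  assumes idl: "is_ideal UNIV I" and tw: "tall_II_wins I"
  shows "HMM_I_wins I"
proof -
  obtain \<tau> where win: "tall_II_winning_strategy I \<tau>"
    using tw unfolding tall_II_wins_def by blast
  have "\<forall>q. \<exists>q'. sorted_wrt (<) q \<longrightarrow>
      prefix q q' \<and> sorted_wrt (<) q' \<and> finite (rejected \<tau> q')"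
    using finitely_rejected_extension[OF win] by blast
  then obtain E where E: "\<And>q. sorted_wrt (<) q \<Longrightarrow>
      prefix q (E q) \<and> sorted_wrt (<) (E q) \<and> finite (rejected \<tau> (E q))"
    by (metis choice)
  \<comment> \<open>position s is Player I's tallness position after Player II's moves s; on positions
    reached in legal plays the guard below always holds.\<close>
  define position where "position s = foldl (\<lambda>q y. E (q @ [y])) (E []) s" for s
  define \<sigma> where "\<sigma> s = (let q = position s in
      if finite (rejected \<tau> q) then rejected \<tau> q \<union> (\<Union>x\<in>set q. {..x}) else {})" for s
  have "HMM_I_winning_strategy I \<sigma>"
    unfolding HMM_I_winning_strategy_def
  proof (intro conjI allI impI)
    fix s show "finite (\<sigma> s)" by (simp add: \<sigma>_def Let_def)
  next
    fix n :: "nat \<Rightarrow> nat"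
    assume legal: "\<forall>k. n k \<notin> \<sigma> (map n [0..<k])"
    define L where "L k = position (map n [0..<k])" for k
    have L_Suc: "L (Suc k) = E (L k @ [n k])" for k by (simp add: L_def position_def)
    have move: "\<tau> (L k @ [n k]) \<and> sorted_wrt (<) (L k @ [n k])"
      if "finite (rejected \<tau> (L k))" "sorted_wrt (<) (L k)" for k
      using legal[rule_format, of k] that
      by (auto simp: \<sigma>_def L_def[symmetric] Let_def rejected_def sorted_wrt_append not_le)
    have inv: "sorted_wrt (<) (L k) \<and> finite (rejected \<tau> (L k))" for k
    proof (induction k)
      case 0
      show ?case using E[of "[]"] by (simp add: L_def position_def)
    next
      case (Suc k)
      then show ?case using E move unfolding L_Suc by blast
    qed
    show "range n \<in> I"
    proof (rule accepted_moves_in_ideal[OF win idl])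
      show "prefix (L k @ [n k]) (L (Suc k))" for k using E move inv by (simp add: L_Suc)
    qed (use move inv in auto)
  qed
  then show ?thesis unfolding HMM_I_wins_def by blast
qed

theorem mainTheorem13:
  fixes I :: "nat set set"
  assumes "is_ideal UNIV I"
  shows "(HMM_I_wins I \<longleftrightarrow> tall_II_wins I) \<and> (tall_II_wins I \<longleftrightarrow> KB_le Delta ED_fin UNIV I)"
  using HMM_I_wins_imp_KB_le[OF assms] KB_le_imp_tall_II_wins[OF assms]
    tall_II_wins_imp_HMM_I_wins[OF assms]
  by blast

end
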